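(* Let $N,n\ge1$ and let $C(\rho)$ be a matrix with $n$ columns whose entries are polynomials with rational coefficients in $\rho\in\mathbb{R}^N$. Fix a linear way of arranging the entries of a vector $m\in\mathbb{R}^n$ as the entries of a matrix $M=M(m)$. Suppose that for some generic $\rho_0\in\mathbb{R}^N$ there is $m_0$ with $C(\rho_0)m_0=0$ and $\operatorname{rank}M(m_0)=s$. Then for every generic $\rho\in\mathbb{R}^N$ there is $m$ with $C(\rho)m=0$ and $\operatorname{rank}M(m)\ge s$.
   Context: A point $\rho\in\mathbb{R}^N$ is generic if its coordinates satisfy no nonzero polynomial equation with rational coefficients. The arrangement $m\mapsto M(m)$ places each entry of $m$ in a fixed position of the matrix $M$ (the same for all $m$). *)

theory Defs
  imports "HOL-Analysis.Analysis"
begin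

inductive_set ratpoly :: "(real^'N \<Rightarrow> real) set" where
  const: "q \<in> \<rat> \<Longrightarrow> (\<lambda>_. q) \<in> ratpoly"
| var: "(\<lambda>x. x $ i) \<in> ratpoly"
| add: "p \<in> ratpoly \<Longrightarrow> q \<in> ratpoly \<Longrightarrow> (\<lambda>x. p x + q x) \<in> ratpoly"
| mult: "p \<in> ratpoly \<Longrightarrow> q \<in> ratpoly \<Longrightarrow> (\<lambda>x. p x * q x) \<in> ratpoly"

text \<open>A point is generic if it is not a root of any nonzero rational polynomial
(over the reals, a polynomial is nonzero iff its polynomial function is not identically zero).\<close>
definition generic :: "real^'N \<Rightarrow> bool" where
  "generic \<rho> \<longleftrightarrow> (\<forall>p\<in>ratpoly. p \<rho> = 0 \<longrightarrow> (\<forall>x. p x = 0))"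

definition polymat_eval :: "('k \<Rightarrow> 'n \<Rightarrow> (real^'N \<Rightarrow> real)) \<Rightarrow> real^'N \<Rightarrow> real^'n^'k" where
  "polymat_eval C \<rho> = (\<chi> i j. C i j \<rho>)"

definition arrange :: "('n::finite \<Rightarrow> 'r \<times> 'c) \<Rightarrow> real^'n \<Rightarrow> real^'c^'r" where
  "arrange pos m = (\<chi> r c. \<Sum>j\<in>{j. pos j = (r, c)}. m $ j)"

end

theory Submission
  imports Defs
begin

text \<open>
  For generic \<open>\<rho>\<close>, the values at \<open>\<rho>\<close> of rational functions with rational coefficients
  form a subfield \<open>F\<^sub>\<rho>\<close> of \<open>\<real>\<close>, and \<open>f \<rho>\<^sub>0 \<mapsto> f \<rho>\<close> is a field isomorphism
  \<open>F\<^sub>\<rho>\<^sub>0 \<cong> F\<^sub>\<rho>\<close>: a rational function vanishing at one generic point vanishes at all of them.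
  The kernel of \<open>C(\<rho>\<^sub>0)\<close> is cut out by equations over \<open>F\<^sub>\<rho>\<^sub>0\<close>, so its
  \<open>F\<^sub>\<rho>\<^sub>0\<close>-points are dense in it; since rank is lower semicontinuous, some such point
  \<open>f(\<rho>\<^sub>0)\<close> near \<open>m\<^sub>0\<close> still has \<open>rank M(f(\<rho>\<^sub>0)) \<ge> s\<close>. Transporting it to \<open>f(\<rho>)\<close>
  keeps it in the kernel and keeps the rank: a linear dependence among vectors with entries
  in \<open>F\<^sub>\<rho>\<close> can be chosen with coefficients in \<open>F\<^sub>\<rho>\<close> (density again), and such
  dependences transfer along the isomorphism.
\<close>

section \<open>Dense solutions of linear systems over subfields of the reals\<close>

lemma Rats_vec_dense:
  fixes x :: "real^'n"
  assumes "\<epsilon> > 0"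
  shows "\<exists>z. (\<forall>i. z $ i \<in> \<rat>) \<and> dist z x < \<epsilon>"
proof -
  obtain a b where ab: "\<forall>i\<in>Basis. a \<bullet> i \<in> \<rat> \<and> b \<bullet> i \<in> \<rat>" "x \<in> cbox a b" "cbox a b \<subseteq> ball x \<epsilon>"
    using rational_cboxes[OF assms] by blast
  have "a \<in> cbox a b"
    using ab(2) by (auto simp: mem_box intro: order_trans)
  with ab(3) have "dist a x < \<epsilon>"
    by (auto simp: dist_commute)
  moreover have "a $ i \<in> \<rat>" for i
    using ab(1) by (simp add: cart_eq_inner_axis)
  ultimately show ?thesis by blast
qed

lemma dist_hyperplane_projection_le:
  fixes e x y z :: "'a::real_inner"
  assumes "e \<bullet> x = 0"
  shows "dist (z - (e \<bullet> z / (e \<bullet> y)) *\<^sub>R y) x \<le> (1 + norm e * norm y / \<bar>e \<bullet> y\<bar>) * dist z x"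
proof -
  have "\<bar>e \<bullet> z\<bar> = \<bar>e \<bullet> (z - x)\<bar>"
    using assms by (simp add: inner_diff_right)
  also have "\<dots> \<le> norm e * dist z x"
    by (simp add: dist_norm Cauchy_Schwarz_ineq2)
  finally have ez: "\<bar>e \<bullet> z\<bar> \<le> norm e * dist z x" .
  have "dist (z - (e \<bullet> z / (e \<bullet> y)) *\<^sub>R y) x = norm ((z - x) - (e \<bullet> z / (e \<bullet> y)) *\<^sub>R y)"
    by (simp add: dist_norm algebra_simps)
  also have "\<dots> \<le> dist z x + \<bar>e \<bullet> z\<bar> / \<bar>e \<bullet> y\<bar> * norm y"
    using norm_triangle_ineq4[of "z - x" "(e \<bullet> z / (e \<bullet> y)) *\<^sub>R y"] by (simp add: dist_norm)
  also have "\<dots> \<le> dist z x + norm e * dist z x / \<bar>e \<bullet> y\<bar> * norm y"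
    using ez by (intro add_left_mono mult_right_mono divide_right_mono) auto
  also have "\<dots> = (1 + norm e * norm y / \<bar>e \<bullet> y\<bar>) * dist z x"
    by (simp add: algebra_simps)
  finally show ?thesis .
qed

lemma inner_nonzero_near:
  fixes e y :: "'a::real_inner"
  assumes "e \<bullet> y \<noteq> 0"
  obtains \<epsilon> where "\<epsilon> > 0" "\<And>z. dist z y < \<epsilon> \<Longrightarrow> e \<bullet> z \<noteq> 0"
proof
  show "\<bar>e \<bullet> y\<bar> / (norm e + 1) > 0"
    using assms by (simp add: add_nonneg_pos)
next
  fix z assume z: "dist z y < \<bar>e \<bullet> y\<bar> / (norm e + 1)"
  have "\<bar>e \<bullet> z - e \<bullet> y\<bar> \<le> norm e * dist z y"
    by (metis Cauchy_Schwarz_ineq2 dist_norm inner_diff_right)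
  also have "\<dots> \<le> norm e * (\<bar>e \<bullet> y\<bar> / (norm e + 1))"
    using z by (intro mult_left_mono) auto
  also have "\<dots> < \<bar>e \<bullet> y\<bar>"
    using assms by (simp add: field_simps add_pos_nonneg)
  finally show "e \<bullet> z \<noteq> 0"
    by auto
qed

locale rat_subfield =
  fixes F :: "real set"
  assumes Rats_subset: "\<rat> \<subseteq> F"
    and add_closed: "a \<in> F \<Longrightarrow> b \<in> F \<Longrightarrow> a + b \<in> F"
    and mult_closed: "a \<in> F \<Longrightarrow> b \<in> F \<Longrightarrow> a * b \<in> F"
    and divide_closed: "a \<in> F \<Longrightarrow> b \<in> F \<Longrightarrow> a / b \<in> F"
begin

lemma diff_closed:
  assumes "a \<in> F" "b \<in> F"
  shows "a - b \<in> F"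
proof -
  have "-1 \<in> F"
    using Rats_subset by (auto simp: subset_eq)
  then show ?thesis
    using add_closed[OF assms(1) mult_closed[of "-1" b]] assms(2) by simp
qed

lemma sum_closed: "(\<And>i. i \<in> S \<Longrightarrow> f i \<in> F) \<Longrightarrow> sum f S \<in> F"
  using Rats_subset by (induction S rule: infinite_finite_induct) (auto intro: add_closed)

lemma inner_closed:
  fixes u v :: "real^'n"
  shows "(\<And>i. u $ i \<in> F) \<Longrightarrow> (\<And>i. v $ i \<in> F) \<Longrightarrow> u \<bullet> v \<in> F"
  unfolding inner_vec_def by (auto intro: sum_closed mult_closed)

lemma solutions_dense:
  fixes L :: "(real^'n) set"
  assumes "finite L" "\<And>e i. e \<in> L \<Longrightarrow> e $ i \<in> F" "\<forall>e\<in>L. e \<bullet> x = 0" "\<epsilon> > 0"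
  shows "\<exists>z. (\<forall>e\<in>L. e \<bullet> z = 0) \<and> (\<forall>i. z $ i \<in> F) \<and> dist z x < \<epsilon>"
  using assms
proof (induction L arbitrary: x \<epsilon> rule: finite_induct)
  case empty
  obtain z :: "real^'n" where "\<forall>i. z $ i \<in> \<rat>" "dist z x < \<epsilon>"
    using Rats_vec_dense[OF empty.prems(3)] by blast
  with Rats_subset show ?case by auto
next
  case (insert e L)
  have IH: "\<exists>z. (\<forall>e\<in>L. e \<bullet> z = 0) \<and> (\<forall>i. z $ i \<in> F) \<and> dist z x < \<epsilon>"
    if "\<forall>e\<in>L. e \<bullet> x = 0" "\<epsilon> > 0" for x \<epsilon>
    by (rule insert.IH) (use insert.prems(1) that in auto)
  have eF: "e $ i \<in> F" for i
    using insert.prems(1) by blast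
  show ?case
  proof (cases "\<exists>y. (\<forall>e'\<in>L. e' \<bullet> y = 0) \<and> e \<bullet> y \<noteq> 0")
    case False
    then show ?thesis
      using IH[of x \<epsilon>] insert.prems(2,3) by auto
  next
    case True
    txt \<open>Push an approximate \<open>F\<close>-solution of \<open>L\<close> onto the hyperplane of \<open>e\<close> along an
      \<open>F\<close>-solution \<open>y'\<close> of \<open>L\<close> with \<open>e \<bullet> y' \<noteq> 0\<close>.\<close>
    then obtain y where y: "\<forall>e'\<in>L. e' \<bullet> y = 0" "e \<bullet> y \<noteq> 0" by blast
    obtain \<epsilon>' where "\<epsilon>' > 0" and off: "\<And>z. dist z y < \<epsilon>' \<Longrightarrow> e \<bullet> z \<noteq> 0"
      using inner_nonzero_near[OF y(2)] by blast
    then obtain y' where y': "\<forall>e'\<in>L. e' \<bullet> y' = 0" "\<forall>i. y' $ i \<in> F" "e \<bullet> y' \<noteq> 0"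
      using IH[OF y(1)] off by blast
    define K where "K = 1 + norm e * norm y' / \<bar>e \<bullet> y'\<bar>"
    have "K > 0"
      unfolding K_def by (simp add: add_pos_nonneg)
    then obtain z where z: "\<forall>e'\<in>L. e' \<bullet> z = 0" "\<forall>i. z $ i \<in> F" "dist z x < \<epsilon> / K"
      using IH[of x "\<epsilon> / K"] insert.prems(2,3) by auto
    define z' where "z' = z - (e \<bullet> z / (e \<bullet> y')) *\<^sub>R y'"
    have "\<forall>e'\<in>insert e L. e' \<bullet> z' = 0"
      using y'(3) z(1) y'(1) by (simp add: z'_def inner_diff_right)
    moreover have "z' $ i \<in> F" for i
    proof -
      have "e \<bullet> z \<in> F" "e \<bullet> y' \<in> F"
        using eF z(2) y'(2) by (blast intro: inner_closed)+
      then show ?thesis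
        unfolding z'_def using z(2) y'(2)
        by (simp add: diff_closed mult_closed divide_closed)
    qed
    moreover have "dist z' x < \<epsilon>"
    proof -
      have "dist z' x \<le> K * dist z x"
        unfolding z'_def K_def using insert.prems(2) by (intro dist_hyperplane_projection_le) simp
      also have "\<dots> < \<epsilon>"
        using z(3) \<open>K > 0\<close> by (simp add: field_simps)
      finally show ?thesis .
    qed
    ultimately show ?thesis by blast
  qed
qed

end

section \<open>Independent families and lower semicontinuity of rank\<close>

text \<open>Unlike \<open>independent\<close> on sets, a family with a repeated vector is dependent.\<close>

definition independent_family :: "('i \<Rightarrow> 'v::real_vector) \<Rightarrow> 'i set \<Rightarrow> bool" where
  "independent_family u R \<longleftrightarrow> (\<forall>c. (\<Sum>i\<in>R. c i *\<^sub>R u i) = 0 \<longrightarrow> (\<forall>i\<in>R. c i = 0))"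

lemma independent_family_iff:
  assumes "finite R"
  shows "independent_family u R \<longleftrightarrow> inj_on u R \<and> independent (u ` R)"
proof -
  have fin: "finite (u ` R)"
    using assms by simp
  have sum_reindex: "(\<Sum>v\<in>u ` R. c v *\<^sub>R v) = (\<Sum>i\<in>R. c (u i) *\<^sub>R u i)" if "inj_on u R" for c
    using that by (simp add: sum.reindex)
  show ?thesis
  proof
    assume ind: "independent_family u R"
    have inj: "inj_on u R"
    proof (rule inj_onI, rule ccontr)
      fix i j assume ij: "i \<in> R" "j \<in> R" "u i = u j" "i \<noteq> j"
      define c where "c t = (if t = i then 1 else if t = j then -1 else 0 :: real)" for t
      have "c t *\<^sub>R u t = (if t = i then u i else 0) - (if t = j then u j else 0)" for t
        using ij(4) by (simp add: c_def)
      then have "(\<Sum>t\<in>R. c t *\<^sub>R u t) = u i - u j"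
        using ij(1,2) assms by (simp add: sum_subtractf)
      then have "c i = 0"
        using ind ij unfolding independent_family_def by auto
      then show False by (simp add: c_def)
    qed
    moreover have "independent (u ` R)"
      unfolding dependent_finite[OF fin]
    proof
      assume "\<exists>c. (\<exists>v\<in>u ` R. c v \<noteq> 0) \<and> (\<Sum>v\<in>u ` R. c v *\<^sub>R v) = 0"
      then obtain c i where "i \<in> R" "c (u i) \<noteq> 0" "(\<Sum>i\<in>R. c (u i) *\<^sub>R u i) = 0"
        using sum_reindex[OF inj] by auto
      moreover have "\<forall>i\<in>R. c (u i) = 0" if "(\<Sum>i\<in>R. c (u i) *\<^sub>R u i) = 0"
        using ind[unfolded independent_family_def, rule_format, of "\<lambda>i. c (u i)"] that by simp
      ultimately show False
        by blast
    qed
    ultimately show "inj_on u R \<and> independent (u ` R)" ..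
  next
    assume "inj_on u R \<and> independent (u ` R)"
    then have inj: "inj_on u R" and ind: "independent (u ` R)" by auto
    show "independent_family u R"
      unfolding independent_family_def
    proof (intro allI impI ballI, rule ccontr)
      fix c i assume sum0: "(\<Sum>i\<in>R. c i *\<^sub>R u i) = 0" and i: "i \<in> R" "c i \<noteq> 0"
      define d where "d = c \<circ> the_inv_into R u"
      have "(\<Sum>v\<in>u ` R. d v *\<^sub>R v) = 0" "d (u i) \<noteq> 0"
        using sum0 i inj by (simp_all add: sum_reindex d_def the_inv_into_f_f)
      with ind i show False
        unfolding dependent_finite[OF fin] by blast
    qed
  qed
qed

lemma card_le_rank_if_independent_rows:
  fixes A :: "real^'c^'r"
  assumes "independent_family (\<lambda>i. row i A) R"
  shows "card R \<le> rank A"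
proof -
  have "inj_on (\<lambda>i. row i A) R" "independent ((\<lambda>i. row i A) ` R)"
    using assms by (simp_all add: independent_family_iff)
  moreover have "(\<lambda>i. row i A) ` R \<subseteq> rows A"
    unfolding rows_def by auto
  ultimately show ?thesis
    by (metis card_image independent_card_le_dim row_rank_def)
qed

lemma independent_rows_of_rank:
  fixes A :: "real^'c^'r"
  obtains R where "card R = rank A" "independent_family (\<lambda>i. row i A) R"
proof -
  obtain B where B: "B \<subseteq> rows A" "independent B" "rows A \<subseteq> span B" "card B = dim (rows A)"
    by (rule basis_exists)
  have "\<forall>b\<in>B. \<exists>i. row i A = b"
    using B(1) unfolding rows_def by blast
  then obtain g where g: "\<And>b. b \<in> B \<Longrightarrow> row (g b) A = b"
    by (metis bchoice)
  have inj: "inj_on g B"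
    by (metis g inj_onI)
  have "(\<lambda>i. row i A) ` g ` B = (\<lambda>b. b) ` B"
    unfolding image_image by (rule image_cong) (simp_all add: g)
  moreover have "inj_on (\<lambda>i. row i A) (g ` B)"
    by (rule inj_onI) (auto simp: g)
  moreover have "finite (g ` B)"
    using B(2) by (simp add: finiteI_independent)
  ultimately have "independent_family (\<lambda>i. row i A) (g ` B)"
    using B(2) by (simp add: independent_family_iff)
  moreover have "card (g ` B) = rank A"
    using B(4) inj by (simp add: card_image row_rank_def)
  ultimately show ?thesis
    by (rule that[rotated])
qed

lemma independent_family_dual:
  fixes u :: "'i \<Rightarrow> 'a::euclidean_space"
  assumes "finite R" "independent_family u R" "j \<in> R"
  obtains g :: "'a \<Rightarrow> real" where "bounded_linear g" "\<And>i. i \<in> R \<Longrightarrow> g (u i) = (if i = j then 1 else 0)"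
proof -
  have inj: "inj_on u R" and ind: "independent (u ` R)"
    using assms by (simp_all add: independent_family_iff)
  obtain g :: "'a \<Rightarrow> real" where g: "linear g" "\<forall>v\<in>u ` R. g v = (if v = u j then 1 else 0)"
    using linear_independent_extend ind by fastforce
  have "bounded_linear g"
    using g(1) by (simp add: linear_conv_bounded_linear)
  moreover have "g (u i) = (if i = j then 1 else 0)" if "i \<in> R" for i
    using g(2) that by (simp add: inj_on_eq_iff[OF inj that assms(3)])
  ultimately show ?thesis
    by (rule that)
qed

lemma coefficient_by_dual:
  assumes "linear g" "finite R" "k \<in> R"
    and "\<And>i. i \<in> R \<Longrightarrow> g (u i) = (if i = k then 1 else 0)"
    and "(\<Sum>i\<in>R. c i *\<^sub>R v i) = 0"
  shows "c k = (\<Sum>i\<in>R. c i * g (u i - v i))"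
proof -
  have "(\<Sum>i\<in>R. c i * g (u i)) = (\<Sum>i\<in>R. if i = k then c i else 0)"
    by (rule sum.cong) (simp_all add: assms(4))
  also have "\<dots> = c k"
    using assms(2,3) by simp
  finally have "(\<Sum>i\<in>R. c i * g (u i)) = c k" .
  moreover have "(\<Sum>i\<in>R. c i * g (v i)) = 0"
    using arg_cong[OF assms(5), of g] assms(1) by (simp add: linear_sum linear_scale linear_0)
  ultimately show ?thesis
    using assms(1) by (simp add: linear_diff right_diff_distrib sum_subtractf)
qed

lemma bounded_linear_family_bound:
  assumes "finite R" "\<And>k. k \<in> R \<Longrightarrow> bounded_linear (g k)"
  obtains M where "M > 0" "\<And>k x. k \<in> R \<Longrightarrow> norm (g k x) \<le> norm x * M"
proof -
  have "\<forall>k\<in>R. \<exists>K>0. \<forall>x. norm (g k x) \<le> norm x * K"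
    using assms(2) bounded_linear.pos_bounded by blast
  then obtain K where K: "\<And>k. k \<in> R \<Longrightarrow> K k > 0" "\<And>k x. k \<in> R \<Longrightarrow> norm (g k x) \<le> norm x * K k"
    by (metis bchoice)
  define M where "M = 1 + (\<Sum>k\<in>R. K k)"
  have "K k \<le> M" if "k \<in> R" for k
    using that assms(1) K(1) member_le_sum[of k R K] unfolding M_def by fastforce
  then have "norm (g k x) \<le> norm x * M" if "k \<in> R" for k x
    using K(2)[OF that] that by (meson mult_left_mono norm_ge_zero order_trans)
  moreover have "M > 0"
    unfolding M_def using K(1) by (simp add: add_pos_nonneg sum_nonneg less_imp_le)
  ultimately show ?thesis
    using that by blast
qed

lemma independent_family_near_dual:
  fixes g :: "'i \<Rightarrow> 'a::real_vector \<Rightarrow> real" and \<eta> :: real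
  assumes "finite R" "\<And>k. k \<in> R \<Longrightarrow> linear (g k)"
    and dual: "\<And>k i. k \<in> R \<Longrightarrow> i \<in> R \<Longrightarrow> g k (u i) = (if i = k then 1 else 0)"
    and near: "\<And>k i. k \<in> R \<Longrightarrow> i \<in> R \<Longrightarrow> \<bar>g k (u i - v i)\<bar> \<le> \<eta>"
    and small: "card R * \<eta> < 1"
  shows "independent_family v R"
  unfolding independent_family_def
proof (intro allI impI)
  fix c assume sum0: "(\<Sum>i\<in>R. c i *\<^sub>R v i) = 0"
  define S where "S = (\<Sum>i\<in>R. \<bar>c i\<bar>)"
  have coeff: "\<bar>c k\<bar> \<le> S * \<eta>" if k: "k \<in> R" for k
  proof -
    have "\<bar>c k\<bar> = \<bar>\<Sum>i\<in>R. c i * g k (u i - v i)\<bar>"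
      using coefficient_by_dual[OF assms(2)[OF k] assms(1) k dual[OF k] sum0] by simp
    also have "\<dots> \<le> (\<Sum>i\<in>R. \<bar>c i\<bar> * \<eta>)"
      using near[OF k] by (intro order_trans[OF sum_abs sum_mono]) (simp add: abs_mult mult_left_mono)
    finally show ?thesis
      by (simp add: S_def sum_distrib_right)
  qed
  have "S \<le> (\<Sum>k\<in>R. S * \<eta>)"
    unfolding S_def[symmetric] using coeff by (subst (1) S_def) (rule sum_mono)
  then have "S * (1 - card R * \<eta>) \<le> 0"
    by (simp add: algebra_simps)
  moreover have "S \<ge> 0"
    unfolding S_def by (simp add: sum_nonneg)
  ultimately have "S = 0"
    using small by (simp add: mult_le_0_iff)
  then show "\<forall>i\<in>R. c i = 0"
    using assms(1) unfolding S_def by (simp add: sum_nonneg_eq_0_iff)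
qed

lemma independent_family_perturb:
  fixes u :: "'i \<Rightarrow> 'a::euclidean_space"
  assumes "finite R" "independent_family u R"
  obtains \<delta> where "\<delta> > 0" "\<And>v. \<forall>i\<in>R. dist (v i) (u i) < \<delta> \<Longrightarrow> independent_family v R"
proof -
  have "\<forall>k\<in>R. \<exists>g :: 'a \<Rightarrow> real. bounded_linear g \<and> (\<forall>i\<in>R. g (u i) = (if i = k then 1 else 0))"
  proof
    fix k assume "k \<in> R"
    then show "\<exists>g :: 'a \<Rightarrow> real. bounded_linear g \<and> (\<forall>i\<in>R. g (u i) = (if i = k then 1 else 0))"
      by (rule independent_family_dual[OF assms]) blast
  qed
  then obtain g :: "'i \<Rightarrow> 'a \<Rightarrow> real" where g_lin: "\<And>k. k \<in> R \<Longrightarrow> bounded_linear (g k)"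
    and g_dual: "\<And>k i. k \<in> R \<Longrightarrow> i \<in> R \<Longrightarrow> g k (u i) = (if i = k then 1 else 0)"
    by (metis bchoice)
  obtain M where M: "M > 0" "\<And>k x. k \<in> R \<Longrightarrow> norm (g k x) \<le> norm x * M"
    using bounded_linear_family_bound[of R g, OF assms(1) g_lin] by blast
  define \<delta> where "\<delta> = 1 / (M * (card R + 1))"
  have "\<delta> > 0"
    unfolding \<delta>_def using M(1) by simp
  moreover have "independent_family v R" if close: "\<forall>i\<in>R. dist (v i) (u i) < \<delta>" for v
  proof (rule independent_family_near_dual[OF assms(1) bounded_linear.linear[OF g_lin] g_dual])
    fix k i assume "k \<in> R" "i \<in> R"
    then have "\<bar>g k (u i - v i)\<bar> \<le> dist (v i) (u i) * M"
      using M(2)[of k "u i - v i"] by (simp add: dist_norm norm_minus_commute)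
    also have "\<dots> \<le> M * \<delta>"
      using close \<open>i \<in> R\<close> M(1) by (simp add: mult.commute mult_le_cancel_left_pos less_imp_le)
    finally show "\<bar>g k (u i - v i)\<bar> \<le> M * \<delta>" .
  next
    show "card R * (M * \<delta>) < 1"
      using M(1) by (simp add: \<delta>_def)
  qed
  ultimately show ?thesis
    by (rule that)
qed

lemma rank_lower_semicontinuous:
  fixes A :: "real^'c^'r"
  shows "\<forall>\<^sub>F B in nhds A. rank A \<le> rank B"
proof -
  obtain R where R: "card R = rank A" "independent_family (\<lambda>i. row i A) R"
    by (rule independent_rows_of_rank)
  obtain \<delta> where \<delta>: "\<delta> > 0" "\<And>v. \<forall>i\<in>R. dist (v i) (row i A) < \<delta> \<Longrightarrow> independent_family v R"
    using independent_family_perturb[OF finite R(2)] by blast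
  have "\<forall>\<^sub>F B in nhds A. dist B A < \<delta>"
    using \<delta>(1) by (auto simp: eventually_nhds_metric dist_commute)
  then show ?thesis
  proof (rule eventually_mono)
    fix B assume "dist B A < \<delta>"
    then have "\<forall>i\<in>R. dist (row i B) (row i A) < \<delta>"
      using dist_vec_nth_le[of B _ A] by (auto simp: row_def vec_lambda_eta intro: le_less_trans)
    then show "rank A \<le> rank B"
      using R(1) \<delta>(2) card_le_rank_if_independent_rows by fastforce
  qed
qed

lemma (in rat_subfield) dependent_family_coefficients:
  fixes u :: "'r::finite \<Rightarrow> real^'c::finite"
  assumes "\<And>i k. u i $ k \<in> F" "\<not> independent_family u R"
  shows "\<exists>c. (\<forall>i. c i \<in> F) \<and> (\<Sum>i\<in>R. c i *\<^sub>R u i) = 0 \<and> (\<exists>i\<in>R. c i \<noteq> 0)"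
proof -
  obtain c i0 where c: "(\<Sum>i\<in>R. c i *\<^sub>R u i) = 0" "i0 \<in> R" "c i0 \<noteq> 0"
    using assms(2) unfolding independent_family_def by blast
  define x :: "real^'r" where "x = (\<chi> i. if i \<in> R then c i else 0)"
  txt \<open>The unit vectors outside \<open>R\<close> keep the approximating coefficients supported on \<open>R\<close>.\<close>
  define L where "L = range (\<lambda>k. \<chi> i. u i $ k) \<union> (\<lambda>j. axis j 1) ` (- R)"
  have column: "(\<chi> i. u i $ k) \<bullet> z = (\<Sum>i\<in>R. z $ i *\<^sub>R u i) $ k"
    if "\<And>j. j \<notin> R \<Longrightarrow> z $ j = 0" for k and z :: "real^'r"
    using that by (simp add: inner_vec_def sum_component mult.commute sum.mono_neutral_cong_right)
  have "e \<bullet> x = 0" if "e \<in> L" for e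
    using that c(1) column[of x] by (auto simp: L_def x_def inner_axis')
  moreover have "e $ i \<in> F" if "e \<in> L" for e i
    using that assms(1) Rats_subset by (auto simp: L_def axis_def)
  ultimately obtain z where z: "\<forall>e\<in>L. e \<bullet> z = 0" "\<forall>i. z $ i \<in> F" "dist z x < \<bar>c i0\<bar>"
    using solutions_dense[of L x "\<bar>c i0\<bar>"] c(3) unfolding L_def by auto
  have z_out: "z $ j = 0" if "j \<notin> R" for j
  proof -
    have "axis j 1 \<in> L"
      using that by (simp add: L_def)
    then have "axis j 1 \<bullet> z = 0"
      using z(1) by blast
    then show ?thesis
      by (simp add: inner_axis')
  qed
  have "(\<Sum>i\<in>R. z $ i *\<^sub>R u i) $ k = 0" for k
  proof -
    have "(\<chi> i. u i $ k) \<in> L"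
      by (simp add: L_def)
    then show ?thesis
      using z(1) column[of z k] z_out by simp
  qed
  then have "(\<Sum>i\<in>R. z $ i *\<^sub>R u i) = 0"
    by (simp add: vec_eq_iff)
  moreover have "z $ i0 \<noteq> 0"
    using z(3) dist_vec_nth_le[of z i0 x] c(2) by (auto simp: x_def dist_real_def)
  ultimately show ?thesis
    using z(2) c(2) by blast
qed

section \<open>Rational functions at generic points\<close>

text \<open>Rational functions, seen only at generic points, where a denominator that is not
  identically zero cannot vanish.\<close>

definition ratfun :: "(real^'N \<Rightarrow> real) set" where
  "ratfun = {f. \<exists>p\<in>ratpoly. \<exists>q\<in>ratpoly. \<forall>x. generic x \<longrightarrow> q x \<noteq> 0 \<and> f x = p x / q x}"

lemma ratfunI:
  assumes "p \<in> ratpoly" "q \<in> ratpoly" "\<And>x. generic x \<Longrightarrow> q x \<noteq> 0 \<and> f x = p x / q x"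
  shows "f \<in> ratfun"
  using assms unfolding ratfun_def by blast

lemma ratpoly_generic_zero:
  "p \<in> ratpoly \<Longrightarrow> generic x \<Longrightarrow> p x = 0 \<Longrightarrow> p y = 0"
  unfolding generic_def by blast

lemma ratfun_generic_zero:
  assumes "f \<in> ratfun" "generic x" "generic y" "f x = 0"
  shows "f y = 0"
proof -
  obtain p q where p: "p \<in> ratpoly" and f: "\<And>x. generic x \<Longrightarrow> q x \<noteq> 0 \<and> f x = p x / q x"
    using assms(1) unfolding ratfun_def by blast
  have "p x = 0"
    using f[OF assms(2)] assms(4) by auto
  then have "p y = 0"
    by (rule ratpoly_generic_zero[OF p assms(2)])
  with assms(3) f show ?thesis by simp
qed

lemma ratpoly_in_ratfun: "p \<in> ratpoly \<Longrightarrow> p \<in> ratfun"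
  by (rule ratfunI[where q = "\<lambda>_. 1"]) (auto intro: ratpoly.const)

lemma ratfun_const: "c \<in> \<rat> \<Longrightarrow> (\<lambda>_. c) \<in> ratfun"
  by (intro ratpoly_in_ratfun ratpoly.const)

lemma ratfun_add:
  assumes "f \<in> ratfun" "g \<in> ratfun"
  shows "(\<lambda>x. f x + g x) \<in> ratfun"
proof -
  obtain p q where pq: "p \<in> ratpoly" "q \<in> ratpoly" and f: "\<And>x. generic x \<Longrightarrow> q x \<noteq> 0 \<and> f x = p x / q x"
    using assms(1) unfolding ratfun_def by blast
  obtain p' q' where pq': "p' \<in> ratpoly" "q' \<in> ratpoly" and g: "\<And>x. generic x \<Longrightarrow> q' x \<noteq> 0 \<and> g x = p' x / q' x"
    using assms(2) unfolding ratfun_def by blast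
  have "(\<lambda>x. p x * q' x + p' x * q x) \<in> ratpoly" "(\<lambda>x. q x * q' x) \<in> ratpoly"
    by (intro ratpoly.add ratpoly.mult pq pq')+
  then show ?thesis
    by (rule ratfunI) (use f g in \<open>auto simp: field_simps\<close>)
qed

lemma ratfun_mult:
  assumes "f \<in> ratfun" "g \<in> ratfun"
  shows "(\<lambda>x. f x * g x) \<in> ratfun"
proof -
  obtain p q where pq: "p \<in> ratpoly" "q \<in> ratpoly" and f: "\<And>x. generic x \<Longrightarrow> q x \<noteq> 0 \<and> f x = p x / q x"
    using assms(1) unfolding ratfun_def by blast
  obtain p' q' where pq': "p' \<in> ratpoly" "q' \<in> ratpoly" and g: "\<And>x. generic x \<Longrightarrow> q' x \<noteq> 0 \<and> g x = p' x / q' x"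
    using assms(2) unfolding ratfun_def by blast
  have "(\<lambda>x. p x * p' x) \<in> ratpoly" "(\<lambda>x. q x * q' x) \<in> ratpoly"
    by (intro ratpoly.mult pq pq')+
  then show ?thesis
    by (rule ratfunI) (use f g in auto)
qed

lemma ratfun_divide:
  assumes "f \<in> ratfun" "g \<in> ratfun"
  shows "(\<lambda>x. f x / g x) \<in> ratfun"
proof -
  obtain p q where pq: "p \<in> ratpoly" "q \<in> ratpoly" and f: "\<And>x. generic x \<Longrightarrow> q x \<noteq> 0 \<and> f x = p x / q x"
    using assms(1) unfolding ratfun_def by blast
  obtain p' q' where pq': "p' \<in> ratpoly" "q' \<in> ratpoly" and g: "\<And>x. generic x \<Longrightarrow> q' x \<noteq> 0 \<and> g x = p' x / q' x"
    using assms(2) unfolding ratfun_def by blast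
  show ?thesis
  proof (cases "\<forall>x. generic x \<longrightarrow> p' x \<noteq> 0")
    case True
    have "(\<lambda>x. p x * q' x) \<in> ratpoly" "(\<lambda>x. q x * p' x) \<in> ratpoly"
      by (intro ratpoly.mult pq pq')+
    then show ?thesis
      by (rule ratfunI) (use True f g in auto)
  next
    case False
    then have "p' x = 0" for x
      using ratpoly_generic_zero[OF pq'(1)] by blast
    then show ?thesis
      by (intro ratfunI[where p = "\<lambda>_. 0" and q = "\<lambda>_. 1"] ratpoly.const) (use g in auto)
  qed
qed

lemma ratfun_sum:
  "(\<And>i. i \<in> S \<Longrightarrow> f i \<in> ratfun) \<Longrightarrow> (\<lambda>x. \<Sum>i\<in>S. f i x) \<in> ratfun"
  by (induction S rule: infinite_finite_induct) (auto intro: ratfun_const ratfun_add)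

definition ratfun_values :: "real^'N \<Rightarrow> real set" where
  "ratfun_values x = (\<lambda>f. f x) ` ratfun"

lemma rat_subfield_ratfun_values: "rat_subfield (ratfun_values x)"
proof
  show "\<rat> \<subseteq> ratfun_values x"
    unfolding ratfun_values_def using ratfun_const by force
next
  fix a b assume "a \<in> ratfun_values x" "b \<in> ratfun_values x"
  then obtain f g where fg: "f \<in> ratfun" "g \<in> ratfun" "a = f x" "b = g x"
    unfolding ratfun_values_def by auto
  show "a + b \<in> ratfun_values x" "a * b \<in> ratfun_values x" "a / b \<in> ratfun_values x"
    unfolding ratfun_values_def fg(3,4)
    by (rule image_eqI[OF _ ratfun_add[OF fg(1,2)]] image_eqI[OF _ ratfun_mult[OF fg(1,2)]]
        image_eqI[OF _ ratfun_divide[OF fg(1,2)]]; simp)+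
qed

lemma ratfun_values_choice:
  assumes "\<And>i. c i \<in> ratfun_values x"
  obtains g where "\<And>i. g i \<in> ratfun" "\<And>i. c i = g i x"
proof -
  have "\<forall>i. \<exists>g. g \<in> ratfun \<and> c i = g x"
    using assms unfolding ratfun_values_def by blast
  from choice[OF this] show ?thesis
    using that by blast
qed

section \<open>Transfer between generic points\<close>

lemma independent_family_ratfun_transfer:
  fixes h :: "'r::finite \<Rightarrow> 'c::finite \<Rightarrow> real^'N \<Rightarrow> real"
  assumes h: "\<And>i k. h i k \<in> ratfun" and gen: "generic x" "generic y"
    and ind: "independent_family (\<lambda>i. \<chi> k. h i k x) R"
  shows "independent_family (\<lambda>i. \<chi> k. h i k y) R"
proof (rule ccontr)
  assume dep: "\<not> ?thesis"
  interpret rat_subfield "ratfun_values y"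
    by (rule rat_subfield_ratfun_values)
  have "\<exists>c. (\<forall>i. c i \<in> ratfun_values y) \<and> (\<Sum>i\<in>R. c i *\<^sub>R (\<chi> k. h i k y)) = 0 \<and> (\<exists>i\<in>R. c i \<noteq> 0)"
    by (rule dependent_family_coefficients[OF _ dep])
      (auto simp: ratfun_values_def intro!: rev_image_eqI[OF h])
  then obtain c i0 where c: "\<forall>i. c i \<in> ratfun_values y"
    "(\<Sum>i\<in>R. c i *\<^sub>R (\<chi> k. h i k y)) = 0" "i0 \<in> R" "c i0 \<noteq> 0"
    by blast
  obtain g where g: "\<And>i. g i \<in> ratfun" "\<And>i. c i = g i y"
    using ratfun_values_choice c(1) by blast
  have "(\<Sum>i\<in>R. g i x * h i k x) = 0" for k
  proof (rule ratfun_generic_zero[OF _ gen(2,1)])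
    show "(\<lambda>t. \<Sum>i\<in>R. g i t * h i k t) \<in> ratfun"
      by (intro ratfun_sum ratfun_mult g h)
    show "(\<Sum>i\<in>R. g i y * h i k y) = 0"
      using arg_cong[OF c(2), of "\<lambda>v. v $ k"] g(2) by (simp add: sum_component)
  qed
  then have "(\<Sum>i\<in>R. g i x *\<^sub>R (\<chi> k. h i k x)) = 0"
    by (simp add: vec_eq_iff sum_component)
  then have "g i0 x = 0"
    using ind[unfolded independent_family_def, rule_format, of "\<lambda>i. g i x"] c(3) by blast
  then have "g i0 y = 0"
    by (rule ratfun_generic_zero[OF g(1) gen])
  with c(4) g(2) show False
    by simp
qed

lemma rank_ratfun_matrix_generic:
  fixes H :: "'r::finite \<Rightarrow> 'c::finite \<Rightarrow> real^'N \<Rightarrow> real"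
  assumes "\<And>i k. H i k \<in> ratfun" "generic x" "generic y"
  shows "rank (\<chi> i k. H i k x) = rank (\<chi> i k. H i k y)"
proof -
  have "rank (\<chi> i k. H i k x) \<le> rank (\<chi> i k. H i k y)" if "generic x" "generic y" for x y
  proof -
    obtain R where R: "card R = rank (\<chi> i k. H i k x)"
      "independent_family (\<lambda>i. row i (\<chi> i k. H i k x)) R"
      by (rule independent_rows_of_rank)
    then have "independent_family (\<lambda>i. row i (\<chi> i k. H i k y)) R"
      using independent_family_ratfun_transfer[of H x y R] assms(1) that by (simp add: row_def)
    then show ?thesis
      using R(1) card_le_rank_if_independent_rows by fastforce
  qed
  then show ?thesis
    using assms(2,3) by (simp add: order_antisym)
qed

lemma bounded_linear_arrange: "bounded_linear (arrange pos)"
  unfolding linear_conv_bounded_linear[symmetric]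
  by (rule linearI) (simp_all add: arrange_def vec_eq_iff sum.distrib sum_distrib_left)

lemma eventually_rank_arrange_ge:
  "\<forall>\<^sub>F m in nhds m0. rank (arrange pos m0) \<le> rank (arrange pos m)"
proof -
  have "filterlim (arrange pos) (nhds (arrange pos m0)) (nhds m0)"
    using bounded_linear.tendsto[OF bounded_linear_arrange[of pos] filterlim_ident, of m0] by simp
  then show ?thesis
    using rank_lower_semicontinuous unfolding filterlim_iff by blast
qed

lemma polymat_kernel_ratfun_transfer:
  assumes "\<And>i j. C i j \<in> ratfun" "\<And>j. f j \<in> ratfun" "generic x" "generic y"
    and "polymat_eval C x *v (\<chi> j. f j x) = 0"
  shows "polymat_eval C y *v (\<chi> j. f j y) = 0"
proof -
  have "(\<Sum>j\<in>UNIV. C i j y * f j y) = 0" for i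
  proof (rule ratfun_generic_zero[OF _ assms(3,4)])
    show "(\<lambda>t. \<Sum>j\<in>UNIV. C i j t * f j t) \<in> ratfun"
      by (intro ratfun_sum ratfun_mult assms(1,2))
    show "(\<Sum>j\<in>UNIV. C i j x * f j x) = 0"
      using arg_cong[OF assms(5), of "\<lambda>v. v $ i"]
      by (simp add: polymat_eval_def matrix_vector_mult_def)
  qed
  then show ?thesis
    by (simp add: polymat_eval_def matrix_vector_mult_def vec_eq_iff)
qed

lemma rank_arrange_ratfun_generic:
  assumes "\<And>j. f j \<in> ratfun" "generic x" "generic y"
  shows "rank (arrange pos (\<chi> j. f j x)) = rank (arrange pos (\<chi> j. f j y))"
  using rank_ratfun_matrix_generic[of "\<lambda>r c t. \<Sum>j\<in>{j. pos j = (r, c)}. f j t", OF _ assms(2,3)]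
  by (simp add: arrange_def ratfun_sum assms(1))

lemma kernel_ratfun_approx:
  assumes "\<And>i j. C i j \<in> ratfun" "generic \<rho>"
    and "polymat_eval C \<rho> *v m = 0" "\<epsilon> > 0"
  obtains f where "\<And>j. f j \<in> ratfun" "polymat_eval C \<rho> *v (\<chi> j. f j \<rho>) = 0"
    "dist (\<chi> j. f j \<rho>) m < \<epsilon>"
proof -
  interpret rat_subfield "ratfun_values \<rho>"
    by (rule rat_subfield_ratfun_values)
  define L where "L = range (\<lambda>i. polymat_eval C \<rho> $ i)"
  have "e $ j \<in> ratfun_values \<rho>" if "e \<in> L" for e j
    using that assms(1) by (auto simp: L_def polymat_eval_def ratfun_values_def)
  moreover have "\<forall>e\<in>L. e \<bullet> m = 0"
    using assms(3) by (auto simp: L_def vec_eq_iff matrix_vector_mul_component)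
  ultimately obtain z where z: "\<forall>e\<in>L. e \<bullet> z = 0" "\<forall>j. z $ j \<in> ratfun_values \<rho>" "dist z m < \<epsilon>"
    using solutions_dense[of L m \<epsilon>] assms(4) unfolding L_def by auto
  obtain f where f: "\<And>j. f j \<in> ratfun" "\<And>j. z $ j = f j \<rho>"
    using ratfun_values_choice z(2) by blast
  then have "z = (\<chi> j. f j \<rho>)"
    by (simp add: vec_eq_iff)
  moreover have "polymat_eval C \<rho> *v z = 0"
    using z(1) by (simp add: L_def vec_eq_iff matrix_vector_mul_component)
  ultimately show ?thesis
    using that[of f] f(1) z(3) by blast
qed

theorem propositionA1:
  fixes C :: "'k::finite \<Rightarrow> 'n::finite \<Rightarrow> (real^'N::finite \<Rightarrow> real)"
    and pos :: "'n \<Rightarrow> 'r::finite \<times> 'c::finite"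
    and \<rho>0 :: "real^'N" and m0 :: "real^'n" and s :: nat
  assumes polys: "\<And>i j. C i j \<in> ratpoly"
    and pos_inj: "inj pos"
    and gen0: "generic \<rho>0"
    and ker0: "polymat_eval C \<rho>0 *v m0 = 0"
    and rank0: "rank (arrange pos m0) = s"
  shows "\<forall>\<rho>. generic \<rho> \<longrightarrow>
           (\<exists>m. polymat_eval C \<rho> *v m = 0 \<and> rank (arrange pos m) \<ge> s)"
proof (intro allI impI)
  fix \<rho> :: "real^'N" assume gen: "generic \<rho>"
  have C: "C i j \<in> ratfun" for i j
    by (rule ratpoly_in_ratfun[OF polys])
  obtain \<epsilon> where "\<epsilon> > 0" and near: "\<And>m. dist m m0 < \<epsilon> \<Longrightarrow> s \<le> rank (arrange pos m)"
    using eventually_rank_arrange_ge[of pos m0] rank0 unfolding eventually_nhds_metric by blast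
  then obtain f where f: "\<And>j. f j \<in> ratfun" "polymat_eval C \<rho>0 *v (\<chi> j. f j \<rho>0) = 0"
    "dist (\<chi> j. f j \<rho>0) m0 < \<epsilon>"
    using kernel_ratfun_approx[OF C gen0 ker0] by metis
  have "polymat_eval C \<rho> *v (\<chi> j. f j \<rho>) = 0"
    using polymat_kernel_ratfun_transfer[OF C f(1) gen0 gen f(2)] .
  moreover have "s \<le> rank (arrange pos (\<chi> j. f j \<rho>))"
    using near[OF f(3)] rank_arrange_ratfun_generic[of f _ _ pos, OF f(1) gen0 gen] by simp
  ultimately show "\<exists>m. polymat_eval C \<rho> *v m = 0 \<and> rank (arrange pos m) \<ge> s"
    by blast
qed

end
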